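(* Let $M$ be an $n$-dimensional path-connected manifold, $f:M\to M$ a diffeomorphism with a symmetry vector field $Y$ (i.e. $(Df(x))^{-1}Y(f(x))=Y(x)$) whose flow $\psi_t$ is complete and has a global Poincar\'e section $\Sigma$ relatively closed in $M$, with inclusion $\iota:\Sigma\hookrightarrow M$ and covering map $p(\sigma,\tau)=\psi_\tau(\sigma)$. Let $F(\sigma,\tau)=(k(\sigma),\tau+\omega(\sigma))$ be a lift of $f$ to $\Sigma\times\mathbb{R}$ ($f\circ p=p\circ F$) with $k$ a diffeomorphism of $\Sigma$. If $I:M\to\mathbb{R}$ is an invariant of $f$ ($I\circ f=I$) that is also an invariant of $\psi$ ($I\circ\psi_t=I$ for all $t$), then $\iota^*I=I\circ\iota$ is an invariant of $k$, i.e. $(I\circ\iota)\circ k=I\circ\iota$.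
   Context: A global Poincar\'e section of a complete flow $\psi$ is a relatively closed (any sequence in $\Sigma$ converging in $M$ converges in $\Sigma$), codimension-one submanifold transverse to the flow such that every orbit has both forward and backward transversal intersections with it. *)

theory Defs
  imports "HOL-Analysis.Analysis"
begin

text \<open>D vs x is the iterated directional derivative of f at x in the directions listed in vs.\<close>
definition smooth_on :: "'a::euclidean_space set \<Rightarrow> ('a \<Rightarrow> 'b::euclidean_space) \<Rightarrow> bool" where
  "smooth_on U f \<longleftrightarrow> open U \<and>
     (\<exists>D :: 'a list \<Rightarrow> 'a \<Rightarrow> 'b.
        (\<forall>x\<in>U. D [] x = f x) \<and>
        (\<forall>vs. continuous_on U (D vs)) \<and>
        (\<forall>vs v x. x \<in> U \<longrightarrow>
            ((\<lambda>t. D vs (x + t *\<^sub>R v)) has_vector_derivative D (v # vs) x) (at 0)))"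

definition smooth_map :: "'a::euclidean_space set \<Rightarrow> ('a \<Rightarrow> 'b::euclidean_space) \<Rightarrow> bool" where
  "smooth_map S g \<longleftrightarrow>
     (\<forall>x\<in>S. \<exists>U G. x \<in> U \<and> smooth_on U G \<and> (\<forall>y\<in>S \<inter> U. G y = g y))"

definition diffeo_on :: "'a::euclidean_space set \<Rightarrow> 'b::euclidean_space set \<Rightarrow> ('a \<Rightarrow> 'b) \<Rightarrow> bool" where
  "diffeo_on S T g \<longleftrightarrow> bij_betw g S T \<and> smooth_map S g \<and> smooth_map T (inv_into S g)"

definition submanifold :: "nat \<Rightarrow> 'a::euclidean_space set \<Rightarrow> bool" where
  "submanifold n M \<longleftrightarrow>
     (\<forall>x\<in>M. \<exists>U (V::'a set) (\<phi>::'a \<Rightarrow> 'a) B. x \<in> U \<and> open U \<and> open V \<and> B \<subseteq> Basis \<and> card B = n \<and>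
        diffeo_on U V \<phi> \<and>
        \<phi> ` (M \<inter> U) = V \<inter> {y. \<forall>i\<in>Basis - B. y \<bullet> i = 0})"

definition tangent_space :: "'a::euclidean_space set \<Rightarrow> 'a \<Rightarrow> 'a set" where
  "tangent_space M x = {v. \<exists>\<gamma> e. e > 0 \<and> (\<forall>t\<in>{-e<..<e}. \<gamma> t \<in> M) \<and> \<gamma> 0 = x \<and>
        smooth_on {-e<..<e} \<gamma> \<and> (\<gamma> has_vector_derivative v) (at 0)}"

definition differential_maps :: "'a::euclidean_space set \<Rightarrow> ('a \<Rightarrow> 'b::euclidean_space) \<Rightarrow> 'a \<Rightarrow> 'a \<Rightarrow> 'b \<Rightarrow> bool" where
  "differential_maps M g x v w \<longleftrightarrow>
     (\<forall>\<gamma> e. e > 0 \<and> (\<forall>t\<in>{-e<..<e}. \<gamma> t \<in> M) \<and> \<gamma> 0 = x \<and>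
        smooth_on {-e<..<e} \<gamma> \<and> (\<gamma> has_vector_derivative v) (at 0)
        \<longrightarrow> ((g \<circ> \<gamma>) has_vector_derivative w) (at 0))"

definition vector_field :: "'a::euclidean_space set \<Rightarrow> ('a \<Rightarrow> 'a) \<Rightarrow> bool" where
  "vector_field M Y \<longleftrightarrow> smooth_map M Y \<and> (\<forall>x\<in>M. Y x \<in> tangent_space M x)"

definition complete_flow :: "'a::euclidean_space set \<Rightarrow> ('a \<Rightarrow> 'a) \<Rightarrow> (real \<Rightarrow> 'a \<Rightarrow> 'a) \<Rightarrow> bool" where
  "complete_flow M Y \<psi> \<longleftrightarrow>
     (\<forall>x\<in>M. \<forall>t. \<psi> t x \<in> M) \<and> (\<forall>x\<in>M. \<psi> 0 x = x) \<and>
     (\<forall>x\<in>M. \<forall>t. ((\<lambda>s. \<psi> s x) has_vector_derivative Y (\<psi> t x)) (at t))"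

definition global_poincare_section ::
  "nat \<Rightarrow> 'a::euclidean_space set \<Rightarrow> ('a \<Rightarrow> 'a) \<Rightarrow> (real \<Rightarrow> 'a \<Rightarrow> 'a) \<Rightarrow> 'a set \<Rightarrow> bool" where
  "global_poincare_section n M Y \<psi> \<Sigma> \<longleftrightarrow>
     \<Sigma> \<subseteq> M \<and> closedin (top_of_set M) \<Sigma> \<and>
     (\<exists>d. d + 1 = n \<and> submanifold d \<Sigma>) \<and>
     (\<forall>\<sigma>\<in>\<Sigma>. Y \<sigma> \<notin> tangent_space \<Sigma> \<sigma>) \<and>
     (\<forall>x\<in>M. (\<exists>t>0. \<psi> t x \<in> \<Sigma>) \<and> (\<exists>t<0. \<psi> t x \<in> \<Sigma>))"

end

theory Submission
  imports Defs
begin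

text \<open>At time zero the lift reads f \<sigma> = \<psi> (\<omega> \<sigma>) (k \<sigma>), so k \<sigma> lies on the \<psi>-orbit of f \<sigma>.
  An invariant of \<psi> is constant along that orbit and an invariant of f does not distinguish
  f \<sigma> from \<sigma>; hence I (k \<sigma>) = I (f \<sigma>) = I \<sigma>.\<close>

lemma global_poincare_section_subset:
  "global_poincare_section n M Y \<psi> \<Sigma> \<Longrightarrow> \<Sigma> \<subseteq> M"
  unfolding global_poincare_section_def by blast

lemma diffeo_on_image_subset:
  "diffeo_on S T g \<Longrightarrow> g ` S \<subseteq> T"
  unfolding diffeo_on_def bij_betw_def by blast

lemma complete_flow_zero:
  "complete_flow M Y \<psi> \<Longrightarrow> x \<in> M \<Longrightarrow> \<psi> 0 x = x"
  unfolding complete_flow_def by blast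

lemma invariant_restricts_to_lift:
  assumes "\<Sigma> \<subseteq> M" and "k ` \<Sigma> \<subseteq> \<Sigma>"
    and lift_at_zero: "\<forall>\<sigma>\<in>\<Sigma>. f \<sigma> = \<psi> (\<omega> \<sigma>) (k \<sigma>)"
    and I_f_inv: "\<forall>x\<in>M. I (f x) = I x"
    and I_flow_inv: "\<forall>x\<in>M. \<forall>t. I (\<psi> t x) = I x"
    and "\<sigma> \<in> \<Sigma>"
  shows "I (k \<sigma>) = I \<sigma>"
proof -
  have "k \<sigma> \<in> M" using assms(1,2,6) by blast
  then have "I (k \<sigma>) = I (\<psi> (\<omega> \<sigma>) (k \<sigma>))" using I_flow_inv by simp
  also have "\<dots> = I (f \<sigma>)" using lift_at_zero \<open>\<sigma> \<in> \<Sigma>\<close> by simp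
  also have "\<dots> = I \<sigma>" using I_f_inv assms(1,6) by blast
  finally show ?thesis .
qed

theorem lemma2p6:
  fixes M \<Sigma> :: "'a::euclidean_space set"
    and n :: nat
    and f :: "'a \<Rightarrow> 'a" and Y :: "'a \<Rightarrow> 'a" and \<psi> :: "real \<Rightarrow> 'a \<Rightarrow> 'a"
    and k :: "'a \<Rightarrow> 'a" and \<omega> :: "'a \<Rightarrow> real" and I :: "'a \<Rightarrow> real"
  assumes manifold: "submanifold n M" and pconn: "path_connected M"
    and f_diffeo: "diffeo_on M M f"
    and Y_field: "vector_field M Y"
    and Y_symmetry: "\<forall>x\<in>M. differential_maps M f x (Y x) (Y (f x))"
    and flow: "complete_flow M Y \<psi>"
    and poincare: "global_poincare_section n M Y \<psi> \<Sigma>"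
    and k_diffeo: "diffeo_on \<Sigma> \<Sigma> k"
    and \<omega>_cont: "continuous_on \<Sigma> \<omega>"
    and lift: "\<forall>\<sigma>\<in>\<Sigma>. \<forall>\<tau>::real. f (\<psi> \<tau> \<sigma>) = \<psi> (\<tau> + \<omega> \<sigma>) (k \<sigma>)"
    and I_f_inv: "\<forall>x\<in>M. I (f x) = I x"
    and I_flow_inv: "\<forall>x\<in>M. \<forall>t. I (\<psi> t x) = I x"
  shows "\<forall>\<sigma>\<in>\<Sigma>. I (k \<sigma>) = I \<sigma>"
proof -
  have \<Sigma>_sub: "\<Sigma> \<subseteq> M"
    using poincare by (rule global_poincare_section_subset)
  have "\<forall>\<sigma>\<in>\<Sigma>. f \<sigma> = \<psi> (\<omega> \<sigma>) (k \<sigma>)"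
  proof
    fix \<sigma> assume "\<sigma> \<in> \<Sigma>"
    then have "f (\<psi> 0 \<sigma>) = f \<sigma>" using complete_flow_zero[OF flow] \<Sigma>_sub by auto
    then show "f \<sigma> = \<psi> (\<omega> \<sigma>) (k \<sigma>)" using lift \<open>\<sigma> \<in> \<Sigma>\<close> by (metis add_0)
  qed
  then show ?thesis
    using invariant_restricts_to_lift[OF \<Sigma>_sub diffeo_on_image_subset[OF k_diffeo]]
      I_f_inv I_flow_inv by blast
qed

end
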